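(* Let $T$ be a tree with $n$ vertices. Then there exists a category system $\mathcal S$ on the vertex set of $T$ such that the greedy category-based routing strategy ROUTING correctly routes messages between all pairs of vertices of $T$ and $\operatorname{memdim}(\mathcal S)=O\big((\operatorname{diam}(T)+\log n)^2\big)$.
   Context: A category system for a graph with vertex set $U$ is a family $\mathcal S\subset 2^U$. For $u\in U$ let $\mathrm{cat}(u)=\{C\in\mathcal S: u\in C\}$; the membership dimension is $\operatorname{memdim}(\mathcal S)=\max_{u\in U}|\mathrm{cat}(u)|$. For $s,t\in U$ define $d(s,t)=|\mathrm{cat}(t)\setminus \mathrm{cat}(s)|$. $N(u)$ is the set of neighbors of $u$, and $\operatorname{diam}$ is the maximum shortest-path distance between two vertices. ROUTING: a node $u$ holding a message for destination $w\neq u$ forwards it to a neighbor $v\in N(u)$ with $d(v,w)<d(u,w)$. ROUTING correctly routes messages between all pairs of vertices if for every ordered pair of distinct vertices $u,w$ there is a neighbor $v\in N(u)$ with $d(v,w)<d(u,w)$. *)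

theory Defs
  imports Complex_Main
begin

definition is_walk :: "('a \<Rightarrow> 'a \<Rightarrow> bool) \<Rightarrow> 'a set \<Rightarrow> 'a list \<Rightarrow> bool" where
  "is_walk E V xs \<longleftrightarrow> xs \<noteq> [] \<and> set xs \<subseteq> V \<and> (\<forall>i. Suc i < length xs \<longrightarrow> E (xs ! i) (xs ! Suc i))"

definition graph_connected :: "'a set \<Rightarrow> ('a \<Rightarrow> 'a \<Rightarrow> bool) \<Rightarrow> bool" where
  "graph_connected V E \<longleftrightarrow> (\<forall>u\<in>V. \<forall>v\<in>V. \<exists>xs. is_walk E V xs \<and> hd xs = u \<and> last xs = v)"

definition has_cycle :: "'a set \<Rightarrow> ('a \<Rightarrow> 'a \<Rightarrow> bool) \<Rightarrow> bool" where
  "has_cycle V E \<longleftrightarrow> (\<exists>xs. is_walk E V xs \<and> distinct xs \<and> length xs \<ge> 3 \<and> E (last xs) (hd xs))"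

definition is_tree :: "'a set \<Rightarrow> ('a \<Rightarrow> 'a \<Rightarrow> bool) \<Rightarrow> bool" where
  "is_tree V E \<longleftrightarrow> finite V \<and> V \<noteq> {} \<and>
     (\<forall>u v. E u v \<longrightarrow> u \<in> V \<and> v \<in> V) \<and> (\<forall>u v. E u v \<longrightarrow> E v u) \<and> (\<forall>u. \<not> E u u) \<and>
     graph_connected V E \<and> \<not> has_cycle V E"

definition graph_dist :: "'a set \<Rightarrow> ('a \<Rightarrow> 'a \<Rightarrow> bool) \<Rightarrow> 'a \<Rightarrow> 'a \<Rightarrow> nat" where
  "graph_dist V E u v = (LEAST k. \<exists>xs. is_walk E V xs \<and> hd xs = u \<and> last xs = v \<and> length xs = Suc k)"

definition graph_diam :: "'a set \<Rightarrow> ('a \<Rightarrow> 'a \<Rightarrow> bool) \<Rightarrow> nat" where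
  "graph_diam V E = Max {graph_dist V E u v | u v. u \<in> V \<and> v \<in> V}"

definition cat :: "'a set set \<Rightarrow> 'a \<Rightarrow> 'a set set" where
  "cat S u = {C \<in> S. u \<in> C}"

definition memdim :: "'a set set \<Rightarrow> 'a set \<Rightarrow> nat" where
  "memdim S U = Max ((\<lambda>u. card (cat S u)) ` U)"

definition catdist :: "'a set set \<Rightarrow> 'a \<Rightarrow> 'a \<Rightarrow> nat" where
  "catdist S s t = card (cat S t - cat S s)"

definition routes_correctly :: "'a set set \<Rightarrow> 'a set \<Rightarrow> ('a \<Rightarrow> 'a \<Rightarrow> bool) \<Rightarrow> bool" where
  "routes_correctly S V E \<longleftrightarrow>
     (\<forall>u\<in>V. \<forall>w\<in>V. u \<noteq> w \<longrightarrow> (\<exists>v. E u v \<and> catdist S v w < catdist S u w))"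

end

theory Submission imports Defs begin

text \<open>Root the tree at a vertex c (only connectivity matters: the tree is its own
breadth-first spanning tree) and label the vertices injectively by numbers below 2^K with
K \<le> log n + 1. The categories are the subtrees of the non-root vertices and, for every depth r
and bit position t, the "bit cuts": all vertices of depth less than r together with those whose
depth-r ancestor does not have a prescribed bit t. If w lies below u, the message moves to the
child of u towards w, whose subtree separates it from u; otherwise it moves to the parent of u,
and a bit in which the labels of u and of the depth-r ancestor of w differ (r the depth of u)
gives a bit cut separating the parent from u. In both cases every category containing u and w
contains the next vertex, so the category distance to w decreases. A vertex lies in at most
diam subtrees and 2 diam K bit cuts.\<close>

lemma bit_differs_below_power:
  fixes a b :: nat
  assumes "a < 2 ^ K" "b < 2 ^ K" "a \<noteq> b"
  obtains t where "t < K" "bit a t \<noteq> bit b t"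
proof -
  have "take_bit K a \<noteq> take_bit K b"
    using assms by (simp add: take_bit_nat_eq_self)
  then obtain t where "bit (take_bit K a) t \<noteq> bit (take_bit K b) t"
    by (auto simp: bit_eq_iff)
  then show ?thesis
    using that by (auto simp: bit_take_bit_iff split: if_splits)
qed

lemma exists_bit_width:
  assumes "n \<ge> 1"
  obtains K :: nat where "n \<le> 2 ^ K" "real K \<le> log 2 (real n) + 1"
proof
  define K where "K = (LEAST k. n \<le> 2 ^ k)"
  show "n \<le> 2 ^ K"
    unfolding K_def by (rule LeastI[of _ n]) simp
  show "real K \<le> log 2 (real n) + 1"
  proof (cases K)
    case (Suc k)
    then have "\<not> n \<le> 2 ^ k"
      using not_less_Least[of k "\<lambda>k. n \<le> 2 ^ k"] K_def by simp
    then have "real k < log 2 (real n)"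
      using less_log2_of_power[of k n] by simp
    then show ?thesis using Suc by simp
  qed (use assms in simp)
qed

lemma memdim_bound_arith:
  fixes D :: nat and K L :: real
  assumes "L \<ge> 0" "K \<le> L + 1"
  shows "real D * (2 * K + 1) \<le> 3 * (real D + L)\<^sup>2"
proof -
  have "real D \<le> (real D)\<^sup>2"
    by (cases D) (auto simp: power2_eq_square)
  have "real D * (2 * K + 1) \<le> real D * (2 * L + 3)"
    using assms by (intro mult_left_mono) auto
  also have "\<dots> \<le> 2 * real D * L + 3 * (real D)\<^sup>2"
    using \<open>real D \<le> (real D)\<^sup>2\<close> by (simp add: algebra_simps)
  also have "\<dots> \<le> 3 * (real D + L)\<^sup>2"
    using assms by (simp add: power2_eq_square algebra_simps)
  finally show ?thesis .
qed

lemma catdist_less: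
  assumes "finite S" "cat S u \<inter> cat S w \<subseteq> cat S v"
    and "C \<in> S" "w \<in> C" "v \<in> C" "u \<notin> C"
  shows "catdist S v w < catdist S u w"
proof -
  have "cat S w - cat S v \<subset> cat S w - cat S u"
    using assms unfolding cat_def by auto
  moreover have "finite (cat S w - cat S u)"
    using assms(1) unfolding cat_def by simp
  ultimately show ?thesis
    unfolding catdist_def by (rule psubset_card_mono[rotated])
qed

lemma is_walk_snoc:
  assumes "is_walk E V xs" "E (last xs) x" "x \<in> V"
  shows "is_walk E V (xs @ [x])"
  using assms unfolding is_walk_def
  by (auto simp: nth_append)
    (metis Suc_lessI last_conv_nth length_greater_0_conv diff_Suc_1)

lemma is_walk_butlast:
  assumes "is_walk E V xs" "length xs \<ge> 2"
  shows "is_walk E V (butlast xs)" "E (last (butlast xs)) (last xs)"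
proof -
  have "butlast xs \<noteq> []"
    using assms(2) by (cases xs) auto
  then show "is_walk E V (butlast xs)"
    using assms unfolding is_walk_def
    by (auto simp: nth_butlast dest: in_set_butlastD)
  have "E (xs ! (length xs - 2)) (xs ! Suc (length xs - 2))"
    using assms unfolding is_walk_def by simp
  moreover have "Suc (length xs - 2) = length xs - 1"
    using assms(2) by simp
  moreover have "last (butlast xs) = xs ! (length xs - 2)"
    using assms(2) \<open>butlast xs \<noteq> []\<close> by (simp add: last_conv_nth nth_butlast numeral_2_eq_2)
  moreover have "last xs = xs ! (length xs - 1)"
    using assms(2) by (intro last_conv_nth) auto
  ultimately show "E (last (butlast xs)) (last xs)"
    by simp
qed

lemma graph_dist_walk:
  assumes "graph_connected V E" "u \<in> V" "v \<in> V"
  obtains xs where "is_walk E V xs" "hd xs = u" "last xs = v"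
    "length xs = Suc (graph_dist V E u v)"
proof -
  obtain xs where "is_walk E V xs" "hd xs = u" "last xs = v"
    using assms unfolding graph_connected_def by blast
  then have "\<exists>k xs. is_walk E V xs \<and> hd xs = u \<and> last xs = v \<and> length xs = Suc k"
    unfolding is_walk_def by (intro exI[of _ "length xs - 1"] exI[of _ xs]) auto
  from LeastI_ex[OF this] show ?thesis
    using that unfolding graph_dist_def by blast
qed

lemma graph_dist_le_walk:
  assumes "is_walk E V xs" "hd xs = u" "last xs = v"
  shows "graph_dist V E u v \<le> length xs - 1"
  unfolding graph_dist_def
  using assms unfolding is_walk_def by (intro Least_le exI[of _ xs]) auto

lemma graph_dist_self: "u \<in> V \<Longrightarrow> graph_dist V E u u = 0"
  using graph_dist_le_walk[of E V "[u]" u u] by (simp add: is_walk_def)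

lemma graph_dist_eq_0_iff:
  assumes "graph_connected V E" "u \<in> V" "v \<in> V"
  shows "graph_dist V E u v = 0 \<longleftrightarrow> u = v"
proof
  assume "graph_dist V E u v = 0"
  moreover obtain xs where "hd xs = u" "last xs = v"
    "length xs = Suc (graph_dist V E u v)"
    using graph_dist_walk[OF assms] by metis
  ultimately have "hd xs = u" "last xs = v" "length xs = 1"
    by simp_all
  then show "u = v" by (cases xs) auto
qed (use assms graph_dist_self in simp)

lemma graph_dist_le_diam:
  assumes "finite V" "u \<in> V" "v \<in> V"
  shows "graph_dist V E u v \<le> graph_diam V E"
proof -
  have "{graph_dist V E u v | u v. u \<in> V \<and> v \<in> V} = (\<lambda>(u, v). graph_dist V E u v) ` (V \<times> V)"
    by auto
  then show ?thesis
    unfolding graph_diam_def using assms by (intro Max_ge) auto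
qed

lemma graph_dist_neighbour_le:
  assumes "graph_connected V E" "c \<in> V" "y \<in> V" "x \<in> V" "E y x"
  shows "graph_dist V E c x \<le> graph_dist V E c y + 1"
proof -
  obtain xs where xs: "is_walk E V xs" "hd xs = c" "last xs = y"
    "length xs = Suc (graph_dist V E c y)"
    using graph_dist_walk[OF assms(1-3)] by metis
  have "is_walk E V (xs @ [x])"
    using is_walk_snoc[OF xs(1)] xs(3) assms by simp
  moreover have "hd (xs @ [x]) = c"
    using xs by (cases xs) auto
  ultimately show ?thesis
    using graph_dist_le_walk[of E V "xs @ [x]" c x] xs(4) by simp
qed

lemma graph_dist_predecessor:
  assumes "graph_connected V E" "c \<in> V" "x \<in> V" "x \<noteq> c"
  obtains y where "y \<in> V" "E y x" "graph_dist V E c y = graph_dist V E c x - 1"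
proof -
  obtain xs where xs: "is_walk E V xs" "hd xs = c" "last xs = x"
    "length xs = Suc (graph_dist V E c x)"
    using graph_dist_walk[OF assms(1-3)] by metis
  have "graph_dist V E c x \<noteq> 0"
    using graph_dist_eq_0_iff[OF assms(1-3)] assms(4) by simp
  then have len: "length xs \<ge> 2" using xs(4) by simp
  define y where "y = last (butlast xs)"
  have walk: "is_walk E V (butlast xs)" and "E y x"
    using is_walk_butlast[OF xs(1) len] xs(3) unfolding y_def by auto
  have "y \<in> V"
    using walk len unfolding y_def is_walk_def by (simp add: last_in_set subset_iff)
  have "hd (butlast xs) = c"
    using xs(2) len by (cases xs) auto
  then have "graph_dist V E c y \<le> graph_dist V E c x - 1"
    using graph_dist_le_walk[OF walk] xs(4) unfolding y_def by simp
  moreover have "graph_dist V E c x \<le> graph_dist V E c y + 1"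
    using graph_dist_neighbour_le[OF assms(1,2) \<open>y \<in> V\<close> assms(3) \<open>E y x\<close>] .
  ultimately show ?thesis
    using that \<open>y \<in> V\<close> \<open>E y x\<close> by simp
qed

locale rooted_graph =
  fixes V :: "'a set" and E :: "'a \<Rightarrow> 'a \<Rightarrow> bool" and c :: 'a
  assumes finite_vertices: "finite V" and root_in: "c \<in> V"
    and symmetric: "E a b \<Longrightarrow> E b a" and connected: "graph_connected V E"
begin

definition depth :: "'a \<Rightarrow> nat" where
  "depth x = graph_dist V E c x"

definition parent :: "'a \<Rightarrow> 'a" where
  "parent x = (if x = c then c else SOME y. y \<in> V \<and> E x y \<and> depth y = depth x - 1)"

text \<open>The ancestor of x at depth r; it is x itself when r \<ge> depth x.\<close>

definition ancestor :: "nat \<Rightarrow> 'a \<Rightarrow> 'a" where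
  "ancestor r x = (parent ^^ (depth x - r)) x"

definition subtree :: "'a \<Rightarrow> 'a set" where
  "subtree y = {x \<in> V. depth y \<le> depth x \<and> ancestor (depth y) x = y}"

lemma depth_eq_0_iff: "x \<in> V \<Longrightarrow> depth x = 0 \<longleftrightarrow> x = c"
  unfolding depth_def using graph_dist_eq_0_iff[OF connected root_in] by auto

lemma depth_le_diam: "x \<in> V \<Longrightarrow> depth x \<le> graph_diam V E"
  unfolding depth_def using graph_dist_le_diam[OF finite_vertices root_in] .

lemma parent_spec:
  assumes "x \<in> V"
  shows "parent x \<in> V \<and> depth (parent x) = depth x - 1 \<and> (x \<noteq> c \<longrightarrow> E x (parent x))"
proof (cases "x = c")
  case True
  then show ?thesis
    using root_in depth_eq_0_iff[OF root_in] by (simp add: parent_def)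
next
  case False
  then have "\<exists>y. y \<in> V \<and> E x y \<and> depth y = depth x - 1"
    using graph_dist_predecessor[OF connected root_in assms] symmetric unfolding depth_def by metis
  from someI_ex[OF this] show ?thesis
    using False by (simp add: parent_def)
qed

lemma parent_in: "x \<in> V \<Longrightarrow> parent x \<in> V"
  and depth_parent: "x \<in> V \<Longrightarrow> depth (parent x) = depth x - 1"
  and adjacent_parent: "x \<in> V \<Longrightarrow> x \<noteq> c \<Longrightarrow> E x (parent x)"
  using parent_spec by blast+

lemma funpow_parent: "x \<in> V \<Longrightarrow> (parent ^^ k) x \<in> V \<and> depth ((parent ^^ k) x) = depth x - k"
  by (induction k) (auto simp: parent_in depth_parent)

lemma ancestor_in: "x \<in> V \<Longrightarrow> ancestor r x \<in> V"
  unfolding ancestor_def using funpow_parent by blast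

lemma depth_ancestor: "x \<in> V \<Longrightarrow> r \<le> depth x \<Longrightarrow> depth (ancestor r x) = r"
  unfolding ancestor_def using funpow_parent by simp

lemma ancestor_eq_self: "depth x \<le> r \<Longrightarrow> ancestor r x = x"
  unfolding ancestor_def by simp

lemma ancestor_ancestor:
  assumes "x \<in> V" "r \<le> s" "s \<le> depth x"
  shows "ancestor r (ancestor s x) = ancestor r x"
proof -
  have "ancestor r (ancestor s x) = (parent ^^ (s - r)) ((parent ^^ (depth x - s)) x)"
    using depth_ancestor assms unfolding ancestor_def by simp
  also have "\<dots> = (parent ^^ (s - r + (depth x - s))) x"
    by (simp add: funpow_add)
  also have "s - r + (depth x - s) = depth x - r"
    using assms by simp
  finally show ?thesis unfolding ancestor_def .
qed

lemma parent_eq_ancestor: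
  assumes "x \<in> V" "x \<noteq> c"
  shows "parent x = ancestor (depth x - 1) x"
proof -
  have "depth x - (depth x - 1) = 1"
    using depth_eq_0_iff[OF assms(1)] assms(2) by simp
  then show ?thesis unfolding ancestor_def by simp
qed

lemma self_in_subtree: "x \<in> V \<Longrightarrow> x \<in> subtree x"
  unfolding subtree_def by (simp add: ancestor_eq_self)

lemma subtree_root: "subtree c = V"
proof -
  have "ancestor 0 x = c" if "x \<in> V" for x
    using that ancestor_in depth_ancestor depth_eq_0_iff by (metis le0)
  then show ?thesis
    using depth_eq_0_iff[OF root_in] unfolding subtree_def by auto
qed

lemma ancestor_in_subtree:
  assumes "x \<in> subtree y" "depth y \<le> s" "s \<le> depth x"
  shows "ancestor s x \<in> subtree y"
  using assms ancestor_in depth_ancestor ancestor_ancestor unfolding subtree_def by auto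

end

locale labelled_rooted_graph = rooted_graph +
  fixes label :: "'a \<Rightarrow> nat" and K :: nat
  assumes label_inj: "inj_on label V" and label_less: "x \<in> V \<Longrightarrow> label x < 2 ^ K"
begin

definition bit_cut :: "nat \<Rightarrow> nat \<Rightarrow> bool \<Rightarrow> 'a set" where
  "bit_cut r t b = {x \<in> V. depth x < r \<or> bit (label (ancestor r x)) t \<noteq> b}"

definition categories :: "'a set set" where
  "categories = subtree ` (V - {c}) \<union>
     (\<lambda>(r, t, b). bit_cut r t b) ` ({1..graph_diam V E} \<times> {..<K} \<times> UNIV)"

lemma ancestor_in_bit_cut:
  assumes "x \<in> bit_cut r t b" "s \<le> depth x"
  shows "ancestor s x \<in> bit_cut r t b"
proof (cases "s < r")
  case True
  then show ?thesis
    using assms ancestor_in depth_ancestor unfolding bit_cut_def by auto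
next
  case False
  then have "ancestor r (ancestor s x) = ancestor r x" "\<not> depth x < r"
    using assms ancestor_ancestor unfolding bit_cut_def by auto
  then show ?thesis
    using assms ancestor_in unfolding bit_cut_def by auto
qed

lemma categories_subset_Pow: "categories \<subseteq> Pow V"
  unfolding categories_def subtree_def bit_cut_def by auto

lemma finite_categories: "finite categories"
  unfolding categories_def using finite_vertices by simp

lemma category_cases:
  assumes "C \<in> categories"
  obtains y where "y \<in> V" "y \<noteq> c" "C = subtree y"
  | r t b where "C = bit_cut r t b"
  using assms unfolding categories_def by auto

lemma child_towards_in_category:
  assumes "C \<in> categories" "u \<in> C" "w \<in> C" "w \<in> subtree u" "depth u < depth w"
  shows "ancestor (Suc (depth u)) w \<in> C"
  using assms(1)
proof (cases rule: category_cases)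
  case (1 y)
  then have "depth y \<le> depth u"
    using assms(2) unfolding subtree_def by simp
  then show ?thesis
    using ancestor_in_subtree assms(3,5) 1 by simp
next
  case 2
  then show ?thesis
    using ancestor_in_bit_cut assms(3,5) by simp
qed

lemma parent_in_category:
  assumes "C \<in> categories" "u \<in> C" "w \<in> C" "w \<notin> subtree u"
  shows "parent u \<in> C"
proof -
  have "u \<in> V" "w \<in> V"
    using assms categories_subset_Pow by auto
  then have "u \<noteq> c"
    using assms(4) subtree_root by auto
  have parent: "parent u = ancestor (depth u - 1) u"
    using parent_eq_ancestor \<open>u \<in> V\<close> \<open>u \<noteq> c\<close> .
  from assms(1) show ?thesis
  proof (cases rule: category_cases)
    case (1 y)
    then have "u \<noteq> y" using assms(3,4) by auto
    then have "depth y \<le> depth u - 1"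
      using assms(2) 1 ancestor_eq_self[of u "depth y"] unfolding subtree_def by force
    then show ?thesis
      using ancestor_in_subtree assms(2) 1 parent by simp
  next
    case 2
    then show ?thesis
      using ancestor_in_bit_cut assms(2) parent by simp
  qed
qed

lemma step_down_decreases_catdist:
  assumes "u \<in> V" "w \<in> subtree u" "w \<noteq> u"
  shows "\<exists>v. E u v \<and> catdist categories v w < catdist categories u w"
proof -
  have "w \<in> V" "depth u \<le> depth w" "ancestor (depth u) w = u"
    using assms(2) unfolding subtree_def by auto
  moreover have "depth u \<noteq> depth w"
    using ancestor_eq_self[of w "depth u"] calculation assms(3) by auto
  ultimately have "w \<in> V" "depth u < depth w" "ancestor (depth u) w = u"
    by simp_all
  define v where "v = ancestor (Suc (depth u)) w"
  have "v \<in> V" and depth_v: "depth v = Suc (depth u)"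
    unfolding v_def using ancestor_in depth_ancestor \<open>w \<in> V\<close> \<open>depth u < depth w\<close> by auto
  then have "v \<noteq> c"
    using depth_eq_0_iff[OF \<open>v \<in> V\<close>] by simp
  have "parent v = ancestor (depth u) v"
    using parent_eq_ancestor[OF \<open>v \<in> V\<close> \<open>v \<noteq> c\<close>] depth_v by simp
  also have "\<dots> = u"
    unfolding v_def using ancestor_ancestor \<open>w \<in> V\<close> \<open>depth u < depth w\<close>
      \<open>ancestor (depth u) w = u\<close> by simp
  finally have "E u v"
    using adjacent_parent[OF \<open>v \<in> V\<close> \<open>v \<noteq> c\<close>] symmetric by simp
  have "subtree v \<in> categories"
    unfolding categories_def using \<open>v \<in> V\<close> \<open>v \<noteq> c\<close> by blast
  moreover have "w \<in> subtree v"
    unfolding subtree_def using \<open>w \<in> V\<close> depth_v \<open>depth u < depth w\<close> v_def by simp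
  moreover have "u \<notin> subtree v"
    unfolding subtree_def using depth_v by simp
  moreover have "cat categories u \<inter> cat categories w \<subseteq> cat categories v"
    using child_towards_in_category assms(2) \<open>depth u < depth w\<close>
    unfolding cat_def v_def by blast
  ultimately have "catdist categories v w < catdist categories u w"
    using catdist_less[OF finite_categories _ _ _ self_in_subtree[OF \<open>v \<in> V\<close>]] by blast
  then show ?thesis
    using \<open>E u v\<close> by blast
qed

lemma step_up_decreases_catdist:
  assumes "u \<in> V" "w \<in> V" "w \<notin> subtree u"
  shows "E u (parent u) \<and> catdist categories (parent u) w < catdist categories u w"
proof -
  have "u \<noteq> c"
    using assms subtree_root by auto
  have "ancestor (depth u) w \<noteq> u"
  proof (cases "depth u \<le> depth w")
    case True
    then show ?thesis
      using assms unfolding subtree_def by blast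
  next
    case False
    then show ?thesis
      using ancestor_eq_self[of w "depth u"] assms self_in_subtree by auto
  qed
  then have "label (ancestor (depth u) w) \<noteq> label u"
    by (rule inj_on_contraD[OF label_inj _ ancestor_in[OF assms(2)] assms(1)])
  then obtain t where "t < K" and t: "bit (label (ancestor (depth u) w)) t \<noteq> bit (label u) t"
    by (rule bit_differs_below_power[OF label_less[OF ancestor_in[OF assms(2)]] label_less[OF assms(1)]])
  define C where "C = bit_cut (depth u) t (bit (label u) t)"
  have "1 \<le> depth u" "depth u \<le> graph_diam V E"
    using depth_eq_0_iff[OF assms(1)] depth_le_diam[OF assms(1)] \<open>u \<noteq> c\<close> by auto
  then have "(depth u, t, bit (label u) t) \<in> {1..graph_diam V E} \<times> {..<K} \<times> UNIV"
    using \<open>t < K\<close> by simp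
  then have "C \<in> categories"
    unfolding categories_def C_def by (rule UnI2[OF rev_image_eqI]) simp
  moreover have "w \<in> C"
    unfolding C_def bit_cut_def using assms t by simp
  moreover have "parent u \<in> C"
    unfolding C_def bit_cut_def using parent_in depth_parent assms(1) \<open>1 \<le> depth u\<close> by simp
  moreover have "u \<notin> C"
    unfolding C_def bit_cut_def by (simp add: ancestor_eq_self)
  moreover have "cat categories u \<inter> cat categories w \<subseteq> cat categories (parent u)"
    using parent_in_category assms(3) unfolding cat_def by blast
  ultimately have "catdist categories (parent u) w < catdist categories u w"
    by (intro catdist_less[OF finite_categories])
  then show ?thesis
    using adjacent_parent[OF assms(1) \<open>u \<noteq> c\<close>] by blast
qed

lemma routes_correctly_categories: "routes_correctly categories V E"
  unfolding routes_correctly_def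
proof (intro ballI impI)
  fix u w assume "u \<in> V" "w \<in> V" "u \<noteq> w"
  show "\<exists>v. E u v \<and> catdist categories v w < catdist categories u w"
  proof (cases "w \<in> subtree u")
    case True
    then show ?thesis
      using step_down_decreases_catdist \<open>u \<in> V\<close> \<open>u \<noteq> w\<close> by simp
  next
    case False
    then show ?thesis
      using step_up_decreases_catdist \<open>u \<in> V\<close> \<open>w \<in> V\<close> by blast
  qed
qed

lemma card_cat_le:
  assumes "x \<in> V"
  shows "card (cat categories x) \<le> graph_diam V E * (2 * K + 1)"
proof -
  define D where "D = graph_diam V E"
  let ?cuts = "(\<lambda>(r, t, b). bit_cut r t b) ` ({1..D} \<times> {..<K} \<times> (UNIV :: bool set))"
  have "cat categories x \<subseteq> (\<lambda>r. subtree (ancestor r x)) ` {1..D} \<union> ?cuts"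
  proof
    fix C assume C: "C \<in> cat categories x"
    show "C \<in> (\<lambda>r. subtree (ancestor r x)) ` {1..D} \<union> ?cuts"
    proof (cases "C \<in> ?cuts")
      case False
      then obtain y where y: "y \<in> V" "y \<noteq> c" "C = subtree y"
        using C unfolding cat_def categories_def D_def by auto
      then have "y = ancestor (depth y) x" "depth y \<in> {1..D}"
        using C depth_eq_0_iff depth_le_diam unfolding cat_def subtree_def D_def
        by (auto simp: Suc_le_eq)
      then show ?thesis
        using y by (intro UnI1 image_eqI[of _ _ "depth y"]) simp_all
    qed simp
  qed
  then have "card (cat categories x) \<le> card ((\<lambda>r. subtree (ancestor r x)) ` {1..D} \<union> ?cuts)"
    by (intro card_mono) auto
  also have "\<dots> \<le> card ((\<lambda>r. subtree (ancestor r x)) ` {1..D}) + card ?cuts"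
    by (rule card_Un_le)
  also have "\<dots> \<le> D + D * K * 2"
    using card_image_le[of "{1..D}" "\<lambda>r. subtree (ancestor r x)"]
      card_image_le[of "{1..D} \<times> {..<K} \<times> (UNIV :: bool set)" "\<lambda>(r, t, b). bit_cut r t b"]
    by (simp add: card_cartesian_product)
  finally show ?thesis
    unfolding D_def by (simp add: algebra_simps)
qed

lemma memdim_categories_le: "memdim categories V \<le> graph_diam V E * (2 * K + 1)"
  unfolding memdim_def using card_cat_le finite_vertices root_in by (subst Max_le_iff) auto

end

theorem theorem1:
  shows "\<exists>c::real. \<forall>(V::nat set) E. is_tree V E \<longrightarrow>
           (\<exists>S. S \<subseteq> Pow V \<and> routes_correctly S V E \<and>
                real (memdim S V) \<le> c * (real (graph_diam V E) + log 2 (real (card V)))\<^sup>2)"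
proof (intro exI[of _ 3] allI impI)
  fix V :: "nat set" and E
  assume "is_tree V E"
  then have "finite V" "V \<noteq> {}" "\<And>a b. E a b \<Longrightarrow> E b a" "graph_connected V E"
    unfolding is_tree_def by auto
  then obtain c where "c \<in> V" and "card V \<ge> 1"
    by (auto simp: Suc_le_eq card_gt_0_iff)
  obtain K where "card V \<le> 2 ^ K" and K: "real K \<le> log 2 (real (card V)) + 1"
    using exists_bit_width[OF \<open>card V \<ge> 1\<close>] by blast
  obtain h where "bij_betw h {0..<card V} V"
    using ex_bij_betw_nat_finite[OF \<open>finite V\<close>] by blast
  then have label: "bij_betw (inv_into {0..<card V} h) V {0..<card V}"
    by (rule bij_betw_inv_into)
  interpret labelled_rooted_graph V E c "inv_into {0..<card V} h" K
  proof
    show "inj_on (inv_into {0..<card V} h) V"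
      using label by (rule bij_betw_imp_inj_on)
    show "inv_into {0..<card V} h x < 2 ^ K" if "x \<in> V" for x
      using bij_betwE[OF label] that \<open>card V \<le> 2 ^ K\<close> by fastforce
  qed fact+
  have "real (memdim categories V) \<le> real (graph_diam V E * (2 * K + 1))"
    using memdim_categories_le by (simp only: of_nat_le_iff)
  also have "\<dots> = real (graph_diam V E) * (2 * real K + 1)"
    by (simp add: algebra_simps)
  also have "\<dots> \<le> 3 * (real (graph_diam V E) + log 2 (real (card V)))\<^sup>2"
    using \<open>card V \<ge> 1\<close> K by (intro memdim_bound_arith) auto
  finally show "\<exists>S. S \<subseteq> Pow V \<and> routes_correctly S V E \<and>
      real (memdim S V) \<le> 3 * (real (graph_diam V E) + log 2 (real (card V)))\<^sup>2"
    using categories_subset_Pow routes_correctly_categories by blast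
qed

end
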